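(* Let $F\subset[\alpha,\beta]$ be closed with $\{\alpha,\beta\}\subset F$ and $\lambda(F)=0$. Then there exists an increasing continuously differentiable homeomorphism $h$ of $[\alpha,\beta]$ onto itself such that $h'(x)=0$ if and only if $x\in h^{-1}(F)$, $h$ is twice differentiable on $[\alpha,\beta]\setminus h^{-1}(F)$, and $h^{-1}$ is absolutely continuous.
   Context: $\lambda$ denotes Lebesgue measure on $\mathbb R$. Derivatives at $\alpha,\beta$ are one-sided. *)

theory Defs
  imports "HOL-Analysis.Analysis"
begin

definition abs_continuous_on_interval :: "real \<Rightarrow> real \<Rightarrow> (real \<Rightarrow> real) \<Rightarrow> bool" where
  "abs_continuous_on_interval a b f \<longleftrightarrow>
     (\<forall>\<epsilon>>0. \<exists>\<delta>>0. \<forall>(n::nat) (u::nat \<Rightarrow> real) (v::nat \<Rightarrow> real).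
        (\<forall>i<n. a \<le> u i \<and> u i \<le> v i \<and> v i \<le> b) \<and>
        (\<forall>i<n. \<forall>j<n. i \<noteq> j \<longrightarrow> v i \<le> u j \<or> v j \<le> u i) \<and>
        (\<Sum>i<n. v i - u i) < \<delta>
        \<longrightarrow> (\<Sum>i<n. \<bar>f (v i) - f (u i)\<bar>) < \<epsilon>)"

end

theory Submission
  imports Defs
begin

text \<open>Let \<open>D t\<close> (\<open>gap_product\<close>) be the product of the distances from \<open>t\<close> to the two ends of the gap of \<open>F\<close>
  containing \<open>t\<close>: it vanishes exactly on \<open>F\<close>, is smooth off \<open>F\<close> and is at most the distance
  to \<open>F\<close>. Since \<open>F\<close> is null, the sets \<open>{D \<le> r}\<close> shrink to a null set, so there are radii
  \<open>r\<^sub>n \<le> 1/(n+1)\<close> with \<open>\<lambda>{D \<le> r\<^sub>n} < 2\<^sup>-\<^sup>n\<close>. A sum \<open>\<Phi>\<close> (\<open>profile\<close>) of smooth bumps of height \<open>\<le> 1\<close>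
  supported in \<open>[0, r\<^sub>n)\<close> then tends to \<open>\<infinity>\<close> at \<open>0\<close> while \<open>\<Phi> \<circ> D\<close> stays integrable.
  For the weight \<open>w = 1 + \<Phi> \<circ> D\<close>, the normalised indefinite integral
  \<open>g y = \<alpha> + c \<integral>\<^sub>\<alpha>\<^sup>y w\<close> is an absolutely continuous increasing homeomorphism of \<open>[\<alpha>, \<beta>]\<close> with
  \<open>g' = c w \<ge> c\<close> off \<open>F\<close>. Its inverse \<open>h\<close> has derivative \<open>1 / (c w \<circ> h)\<close> off \<open>h\<^sup>-\<^sup>1 F\<close>, and
  because \<open>w\<close> blows up near \<open>F\<close>, \<open>g\<close> expands distances arbitrarily near \<open>F\<close>, so \<open>h' = 0\<close> on
  \<open>h\<^sup>-\<^sup>1 F\<close> and \<open>h'\<close> is continuous.\<close>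

section \<open>Absolute continuity of indefinite integrals\<close>

lemma indefinite_integral_diff:
  fixes f :: "real \<Rightarrow> real"
  assumes "f integrable_on {a..b}" "a \<le> u" "u \<le> v" "v \<le> b"
  shows "integral {a..v} f - integral {a..u} f = integral {u..v} f"
proof -
  have "f integrable_on {a..v}" using assms by (intro integrable_on_subinterval[OF assms(1)]) auto
  then have "integral {a..u} f + integral {u..v} f = integral {a..v} f"
    using assms by (intro Henstock_Kurzweil_Integration.integral_combine) auto
  then show ?thesis by simp
qed

lemma sum_integrals_nonoverlapping_le:
  fixes f :: "real \<Rightarrow> real" and n :: nat
  assumes f: "f integrable_on {a..b}" "\<And>t. t \<in> {a..b} \<Longrightarrow> 0 \<le> f t"
    and uv: "\<And>i. i < n \<Longrightarrow> a \<le> u i \<and> u i \<le> v i \<and> v i \<le> b"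
    and disj: "\<And>i j. i < n \<Longrightarrow> j < n \<Longrightarrow> i \<noteq> j \<Longrightarrow> v i \<le> u j \<or> v j \<le> u i"
  shows "(\<Sum>i<n. integral {u i..v i} f) \<le> integral {a..b} f"
proof -
  let ?U = "\<Union>i<n. {u i..v i}"
  have "(f has_integral integral {u i..v i} f) {u i..v i}" if "i < n" for i
    using uv[OF that] by (intro integrable_integral integrable_on_subinterval[OF f(1)]) auto
  moreover have "negligible ({u i..v i} \<inter> {u j..v j})" if "i < n" "j < n" "i \<noteq> j" for i j
    using disj[OF that] by (intro negligible_subset[OF negligible_finite[of "{v i, v j}"]]) auto
  ultimately have U: "(f has_integral (\<Sum>i<n. integral {u i..v i} f)) ?U"
    by (intro has_integral_UN) (auto simp: pairwise_def)
  have "integral ?U f \<le> integral {a..b} f"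
    using U uv f by (intro integral_subset_le) fastforce+
  with U show ?thesis by (simp add: integral_unique)
qed

lemma integrable_min_const:
  fixes f :: "real \<Rightarrow> real"
  assumes "f integrable_on {a..b}" "\<And>t. t \<in> {a..b} \<Longrightarrow> 0 \<le> f t"
  shows "(\<lambda>t. min (f t) c) integrable_on {a..b}"
proof -
  have "f absolutely_integrable_on {a..b}"
    using assms by (rule nonnegative_absolutely_integrable_1)
  then have "(\<lambda>t. min (f t) c) absolutely_integrable_on {a..b}"
    by (intro absolutely_integrable_min_1) auto
  then show ?thesis by (simp add: absolutely_integrable_on_def)
qed

lemma integral_min_const_tendsto:
  fixes f :: "real \<Rightarrow> real"
  assumes f: "f integrable_on {a..b}" and f_nonneg: "\<And>t. t \<in> {a..b} \<Longrightarrow> 0 \<le> f t"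
  shows "(\<lambda>m. integral {a..b} (\<lambda>t. min (f t) (real m))) \<longlonglongrightarrow> integral {a..b} f"
proof -
  have int: "(\<lambda>t. min (f t) (real m)) integrable_on {a..b}" for m
    using f f_nonneg by (rule integrable_min_const)
  have "\<bar>integral {a..b} (\<lambda>t. min (f t) (real m))\<bar> \<le> integral {a..b} f" for m
  proof -
    have "0 \<le> integral {a..b} (\<lambda>t. min (f t) (real m))"
      using f_nonneg by (intro integral_nonneg[OF int]) simp
    moreover have "integral {a..b} (\<lambda>t. min (f t) (real m)) \<le> integral {a..b} f"
      by (intro integral_le[OF int f]) simp
    ultimately show ?thesis by simp
  qed
  then have "bounded (range (\<lambda>m. integral {a..b} (\<lambda>t. min (f t) (real m))))"
    unfolding bounded_real by blast
  moreover have "(\<lambda>m. min (f t) (real m)) \<longlonglongrightarrow> f t" for t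
  proof (rule tendsto_eventually)
    show "\<forall>\<^sub>F m in sequentially. min (f t) (real m) = f t"
      using eventually_ge_at_top[of "nat \<lceil>f t\<rceil>"]
    proof eventually_elim
      case (elim m)
      then have "f t \<le> real m" using real_nat_ceiling_ge[of "f t"] by linarith
      then show ?case by simp
    qed
  qed
  ultimately have "f integrable_on {a..b} \<and>
      (\<lambda>m. integral {a..b} (\<lambda>t. min (f t) (real m))) \<longlonglongrightarrow> integral {a..b} f"
    by (intro monotone_convergence_increasing[OF int]) auto
  then show ?thesis ..
qed

lemma integral_le_min_const:
  fixes f :: "real \<Rightarrow> real"
  assumes f: "f integrable_on {u..v}" "\<And>t. t \<in> {u..v} \<Longrightarrow> 0 \<le> f t" and "u \<le> v"
  shows "integral {u..v} f \<le> c * (v - u) + integral {u..v} (\<lambda>t. f t - min (f t) c)"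
proof -
  have int: "(\<lambda>t. min (f t) c) integrable_on {u..v}"
    using f by (rule integrable_min_const)
  have "integral {u..v} (\<lambda>t. min (f t) c) \<le> integral {u..v} (\<lambda>_. c)"
    by (intro integral_le[OF int]) auto
  then show ?thesis
    using \<open>u \<le> v\<close> by (simp add: integral_diff[OF f(1) int] mult.commute)
qed

lemma abs_indefinite_integral_diff_le:
  fixes f :: "real \<Rightarrow> real"
  assumes f: "f integrable_on {a..b}" and f_nonneg: "\<And>t. t \<in> {a..b} \<Longrightarrow> 0 \<le> f t"
    and uv: "a \<le> u" "u \<le> v" "v \<le> b"
  shows "\<bar>(C + integral {a..v} f) - (C + integral {a..u} f)\<bar>
    \<le> c * (v - u) + integral {u..v} (\<lambda>t. f t - min (f t) c)"
proof -
  have sub: "{u..v} \<subseteq> {a..b}" using uv by auto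
  have "integral {a..v} f - integral {a..u} f = integral {u..v} f"
    using f uv by (rule indefinite_integral_diff)
  moreover have "0 \<le> integral {u..v} f"
    using f_nonneg sub by (intro integral_nonneg integrable_on_subinterval[OF f sub]) auto
  moreover have "integral {u..v} f \<le> c * (v - u) + integral {u..v} (\<lambda>t. f t - min (f t) c)"
    using f_nonneg sub uv by (intro integral_le_min_const integrable_on_subinterval[OF f sub]) auto
  ultimately show ?thesis by simp
qed

text \<open>Truncating \<open>f\<close> at a height \<open>M\<close>: the bounded part contributes at most \<open>M\<close> times the total
  length, and the remainder has small integral by monotone convergence.\<close>

lemma abs_continuous_on_interval_integral:
  fixes f :: "real \<Rightarrow> real"
  assumes f: "f integrable_on {a..b}" and f_nonneg: "\<And>t. t \<in> {a..b} \<Longrightarrow> 0 \<le> f t"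
  shows "abs_continuous_on_interval a b (\<lambda>y. C + integral {a..y} f)"
  unfolding abs_continuous_on_interval_def
proof (intro allI impI)
  fix \<epsilon> :: real assume "0 < \<epsilon>"
  define r where "r m = (\<lambda>t. f t - min (f t) (real m))" for m
  have r_int: "r m integrable_on {a..b}" for m
    unfolding r_def by (intro integrable_diff f integrable_min_const f_nonneg)
  obtain M where "norm (integral {a..b} (\<lambda>t. min (f t) (real M)) - integral {a..b} f) < \<epsilon> / 2"
    using LIMSEQ_D[OF integral_min_const_tendsto[OF f f_nonneg], of "\<epsilon> / 2"] \<open>0 < \<epsilon>\<close> by auto
  moreover have "integral {a..b} (r M) = integral {a..b} f - integral {a..b} (\<lambda>t. min (f t) (real M))"
    unfolding r_def using f f_nonneg by (intro integral_diff integrable_min_const)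
  ultimately have tail: "integral {a..b} (r M) < \<epsilon> / 2" unfolding real_norm_def by linarith
  define \<delta> where "\<delta> = \<epsilon> / (2 * (M + 1))"
  show "\<exists>\<delta>>0. \<forall>(n::nat) u v. (\<forall>i<n. a \<le> u i \<and> u i \<le> v i \<and> v i \<le> b) \<and>
      (\<forall>i<n. \<forall>j<n. i \<noteq> j \<longrightarrow> v i \<le> u j \<or> v j \<le> u i) \<and> (\<Sum>i<n. v i - u i) < \<delta> \<longrightarrow>
      (\<Sum>i<n. \<bar>(C + integral {a..v i} f) - (C + integral {a..u i} f)\<bar>) < \<epsilon>"
  proof (intro exI[of _ \<delta>] conjI allI impI; (elim conjE)?)
    show "\<delta> > 0" using \<open>0 < \<epsilon>\<close> by (simp add: \<delta>_def)
    fix n :: nat and u v :: "nat \<Rightarrow> real"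
    assume uv: "\<forall>i<n. a \<le> u i \<and> u i \<le> v i \<and> v i \<le> b"
      and disj: "\<forall>i<n. \<forall>j<n. i \<noteq> j \<longrightarrow> v i \<le> u j \<or> v j \<le> u i"
      and short: "(\<Sum>i<n. v i - u i) < \<delta>"
    have "\<bar>(C + integral {a..v i} f) - (C + integral {a..u i} f)\<bar>
        \<le> real M * (v i - u i) + integral {u i..v i} (r M)" if "i < n" for i
      using uv that unfolding r_def by (intro abs_indefinite_integral_diff_le[OF f f_nonneg]) auto
    then have "(\<Sum>i<n. \<bar>(C + integral {a..v i} f) - (C + integral {a..u i} f)\<bar>)
        \<le> real M * (\<Sum>i<n. v i - u i) + (\<Sum>i<n. integral {u i..v i} (r M))"
      by (simp add: sum_distrib_left flip: sum.distrib, intro sum_mono) auto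
    also have "(\<Sum>i<n. integral {u i..v i} (r M)) \<le> integral {a..b} (r M)"
      using r_int uv disj by (intro sum_integrals_nonoverlapping_le) (auto simp: r_def)
    also have "real M * (\<Sum>i<n. v i - u i) \<le> real M * \<delta>"
      using short by (intro mult_left_mono) auto
    also have "real M * \<delta> + integral {a..b} (r M) < \<epsilon>"
    proof -
      have "real M * \<delta> < \<epsilon> / 2" using \<open>0 < \<epsilon>\<close> by (simp add: \<delta>_def field_simps)
      with tail show ?thesis by linarith
    qed
    finally show "(\<Sum>i<n. \<bar>(C + integral {a..v i} f) - (C + integral {a..u i} f)\<bar>) < \<epsilon>"
      by simp
  qed
qed

lemma has_real_derivative_sq_max_0: "((\<lambda>x. (max x 0)\<^sup>2) has_real_derivative 2 * max x 0) (at x)"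
proof -
  consider "x > 0" | "x < 0" | "x = 0" by linarith
  then show ?thesis
  proof cases
    case 1
    have "((\<lambda>y. y\<^sup>2) has_real_derivative 2 * max x 0) (at x)"
      using 1 by (auto intro!: derivative_eq_intros)
    then show ?thesis
      by (rule has_field_derivative_transform_within_open[where S="{0<..}"]) (use 1 in auto)
  next
    case 2
    have "((\<lambda>y. 0) has_real_derivative 2 * max x 0) (at x)" using 2 by simp
    then show ?thesis
      by (rule has_field_derivative_transform_within_open[where S="{..<0}"]) (use 2 in auto)
  next
    case 3
    have "((\<lambda>y::real. (max y 0)\<^sup>2 / y) \<longlongrightarrow> 0) (at 0)"
    proof (rule Lim_null_comparison)
      show "\<forall>\<^sub>F y in at 0. norm ((max y 0)\<^sup>2 / y) \<le> \<bar>y\<bar>"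
        by (intro always_eventually allI) (auto simp: max_def power2_eq_square abs_mult)
      show "((\<lambda>y::real. \<bar>y\<bar>) \<longlongrightarrow> 0) (at 0)"
        using tendsto_rabs[OF tendsto_ident_at[of 0 UNIV]] by simp
    qed
    then show ?thesis using 3 by (simp add: has_field_derivative_iff)
  qed
qed

definition bump :: "real \<Rightarrow> real \<Rightarrow> real" where
  "bump r s = (max (1 - s / r) 0)\<^sup>2"

lemma bump_nonneg: "0 \<le> bump r s"
  by (simp add: bump_def)

lemma bump_le_1: "0 < r \<Longrightarrow> 0 \<le> s \<Longrightarrow> bump r s \<le> 1"
  by (auto simp: bump_def max_def power_le_one)

lemma bump_eq_0: "0 < r \<Longrightarrow> r \<le> s \<Longrightarrow> bump r s = 0"
  by (simp add: bump_def max_def)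

lemma bump_ge_quarter: "0 < r \<Longrightarrow> s \<le> r / 2 \<Longrightarrow> 1 / 4 \<le> bump r s"
proof -
  assume "0 < r" "s \<le> r / 2"
  then have "1 / 2 \<le> 1 - s / r" by (simp add: field_simps)
  then have "1 / 2 \<le> max (1 - s / r) 0" by (simp add: le_max_iff_disj)
  then have "(1 / 2)\<^sup>2 \<le> (max (1 - s / r) 0)\<^sup>2" by (rule power_mono) simp
  moreover have "(1 / 2 :: real)\<^sup>2 = 1 / 4" by (simp add: power2_eq_square)
  ultimately show ?thesis unfolding bump_def by linarith
qed

lemma bump_differentiable: "bump r differentiable (at s)"
proof -
  have "(\<lambda>x. (max x 0)\<^sup>2) differentiable (at (1 - s / r))"
    unfolding real_differentiable_def using has_real_derivative_sq_max_0 by blast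
  moreover have "(\<lambda>s. 1 - s / r) differentiable (at s)"
    unfolding divide_inverse by (intro derivative_intros)
  ultimately have "(\<lambda>s. (max (1 - s / r) 0)\<^sup>2) differentiable (at s)"
    by (rule differentiable_compose)
  then show ?thesis by (simp add: bump_def[abs_def])
qed

lemma continuous_on_bump: "continuous_on A (bump r)"
  by (rule differentiable_imp_continuous_on, rule differentiable_at_imp_differentiable_on,
      rule bump_differentiable)

section \<open>The gap function of a closed set\<close>

locale closed_subset_interval =
  fixes \<alpha> \<beta> :: real and F :: "real set"
  assumes lt: "\<alpha> < \<beta>" and closed: "closed F" and subset: "F \<subseteq> {\<alpha>..\<beta>}"
    and left_mem: "\<alpha> \<in> F" and right_mem: "\<beta> \<in> F"
begin

definition gap_left :: "real \<Rightarrow> real" where "gap_left t = Sup (F \<inter> {..t})"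
definition gap_right :: "real \<Rightarrow> real" where "gap_right t = Inf (F \<inter> {t..})"

text \<open>Unlike the distance to \<open>F\<close>, which has corners at the midpoints of the gaps, this is a
  quadratic polynomial on each gap.\<close>

definition gap_product :: "real \<Rightarrow> real" where
  "gap_product t = (t - gap_left t) * (gap_right t - t) / (\<beta> - \<alpha>)"

lemma gap_left:
  assumes "t \<in> {\<alpha>..\<beta>}"
  shows "gap_left t \<in> F" "gap_left t \<le> t" "\<And>f. f \<in> F \<Longrightarrow> f \<le> t \<Longrightarrow> f \<le> gap_left t"
proof -
  have ne: "F \<inter> {..t} \<noteq> {}" using left_mem assms by auto
  have bdd: "bdd_above (F \<inter> {..t})" by (rule bdd_aboveI[of _ t]) auto
  have "closed (F \<inter> {..t})" using closed by (intro closed_Int) auto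
  then show "gap_left t \<in> F" "gap_left t \<le> t"
    using closed_contains_Sup[OF ne bdd] unfolding gap_left_def by auto
  show "\<And>f. f \<in> F \<Longrightarrow> f \<le> t \<Longrightarrow> f \<le> gap_left t"
    unfolding gap_left_def by (rule cSup_upper) (use bdd in auto)
qed

lemma gap_right:
  assumes "t \<in> {\<alpha>..\<beta>}"
  shows "gap_right t \<in> F" "t \<le> gap_right t" "\<And>f. f \<in> F \<Longrightarrow> t \<le> f \<Longrightarrow> gap_right t \<le> f"
proof -
  have ne: "F \<inter> {t..} \<noteq> {}" using right_mem assms by auto
  have bdd: "bdd_below (F \<inter> {t..})" by (rule bdd_belowI[of _ t]) auto
  have "closed (F \<inter> {t..})" using closed by (intro closed_Int) auto
  then show "gap_right t \<in> F" "t \<le> gap_right t"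
    using closed_contains_Inf[OF ne bdd] unfolding gap_right_def by auto
  show "\<And>f. f \<in> F \<Longrightarrow> t \<le> f \<Longrightarrow> gap_right t \<le> f"
    unfolding gap_right_def by (rule cInf_lower) (use bdd in auto)
qed

lemma gap_left_less: "t \<in> {\<alpha>..\<beta>} \<Longrightarrow> t \<notin> F \<Longrightarrow> gap_left t < t"
  using gap_left by (metis order_le_less)

lemma gap_right_greater: "t \<in> {\<alpha>..\<beta>} \<Longrightarrow> t \<notin> F \<Longrightarrow> t < gap_right t"
  using gap_right by (metis order_le_less)

lemma gap_product_nonneg: "t \<in> {\<alpha>..\<beta>} \<Longrightarrow> 0 \<le> gap_product t"
  using gap_left[of t] gap_right[of t] lt unfolding gap_product_def by auto

lemma gap_product_eq_0_iff:
  assumes t: "t \<in> {\<alpha>..\<beta>}"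
  shows "gap_product t = 0 \<longleftrightarrow> t \<in> F"
proof
  assume "gap_product t = 0"
  show "t \<in> F"
  proof (rule ccontr)
    assume "t \<notin> F"
    then have "0 < t - gap_left t" "0 < gap_right t - t"
      using gap_left_less[OF t] gap_right_greater[OF t] by auto
    with \<open>gap_product t = 0\<close> lt show False by (simp add: gap_product_def)
  qed
next
  assume "t \<in> F"
  then have "gap_left t = t" using gap_left[OF t] by (simp add: order_antisym)
  then show "gap_product t = 0" by (simp add: gap_product_def)
qed

lemma gap_product_le_dist:
  assumes t: "t \<in> {\<alpha>..\<beta>}" and f: "f \<in> F"
  shows "gap_product t \<le> \<bar>t - f\<bar>"
proof -
  have ends: "\<alpha> \<le> gap_left t" "gap_left t \<le> t" "t \<le> gap_right t" "gap_right t \<le> \<beta>"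
    using gap_left[OF t] gap_right[OF t] subset by auto
  then have "(t - gap_left t) * (gap_right t - t) \<le> \<bar>t - f\<bar> * (\<beta> - \<alpha>)"
  proof (cases "f \<le> t")
    case True
    then have "t - gap_left t \<le> \<bar>t - f\<bar>" using gap_left(3)[OF t f] by simp
    with ends show ?thesis by (intro mult_mono) auto
  next
    case False
    then have "gap_right t - t \<le> \<bar>t - f\<bar>" using gap_right(3)[OF t f] by simp
    with ends show ?thesis by (subst mult.commute) (intro mult_mono, auto)
  qed
  then show ?thesis using lt unfolding gap_product_def by (simp add: divide_le_eq)
qed

lemma gap_ends_const:
  assumes t: "t \<in> {\<alpha>..\<beta>}" "t \<notin> F" and s: "s \<in> {gap_left t<..<gap_right t}"
  shows "gap_left s = gap_left t" "gap_right s = gap_right t"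
proof -
  have "f \<le> gap_left t \<or> gap_right t \<le> f" if "f \<in> F" for f
    using gap_left(3)[OF t(1) that] gap_right(3)[OF t(1) that] by linarith
  then have "F \<inter> {..s} = F \<inter> {..t}" "F \<inter> {s..} = F \<inter> {t..}"
    using s gap_left_less[OF t] gap_right_greater[OF t] by force+
  then show "gap_left s = gap_left t" "gap_right s = gap_right t"
    unfolding gap_left_def gap_right_def by simp_all
qed

lemma gap_product_differentiable:
  assumes t: "t \<in> {\<alpha>..\<beta>}" "t \<notin> F"
  shows "gap_product differentiable (at t)"
proof (rule differentiable_transform_within)
  let ?p = "\<lambda>s. (s - gap_left t) * (gap_right t - s) / (\<beta> - \<alpha>)"
  show "?p differentiable (at t)" using lt by (intro derivative_intros) auto
  show "0 < min (t - gap_left t) (gap_right t - t)"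
    using gap_left_less[OF t] gap_right_greater[OF t] by simp
  show "?p s = gap_product s" if "dist s t < min (t - gap_left t) (gap_right t - t)" for s
  proof -
    have s: "s \<in> {gap_left t<..<gap_right t}" using that by (auto simp: dist_real_def abs_less_iff)
    show ?thesis unfolding gap_product_def gap_ends_const[OF t s] ..
  qed
qed (rule UNIV_I)

lemma continuous_on_gap_product: "continuous_on {\<alpha>..\<beta>} gap_product"
  unfolding continuous_on_eq_continuous_within
proof (rule ballI)
  fix t assume t: "t \<in> {\<alpha>..\<beta>}"
  show "continuous (at t within {\<alpha>..\<beta>}) gap_product"
  proof (cases "t \<in> F")
    case False
    show ?thesis
      using gap_product_differentiable[OF t False]
      by (rule differentiable_imp_continuous_within[OF differentiable_at_withinI])
  next
    case True
    then have "gap_product t = 0" using gap_product_eq_0_iff[OF t] by simp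
    show ?thesis unfolding continuous_within_eps_delta
    proof (intro allI impI)
      fix e :: real assume "0 < e"
      show "\<exists>d>0. \<forall>s\<in>{\<alpha>..\<beta>}. dist s t < d \<longrightarrow> dist (gap_product s) (gap_product t) < e"
      proof (intro exI[of _ e] conjI ballI impI)
        fix s assume s: "s \<in> {\<alpha>..\<beta>}" "dist s t < e"
        have "dist (gap_product s) (gap_product t) = \<bar>gap_product s\<bar>"
          using \<open>gap_product t = 0\<close> by (simp add: dist_real_def)
        also have "\<dots> \<le> \<bar>s - t\<bar>"
          using gap_product_le_dist[OF s(1) True] gap_product_nonneg[OF s(1)] by simp
        also have "\<dots> < e" using s(2) by (simp add: dist_real_def)
        finally show "dist (gap_product s) (gap_product t) < e" .
      qed fact
    qed
  qed
qed

end

section \<open>A profile with integrable blow-up\<close>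

locale negligible_zeros =
  fixes a b :: real and D :: "real \<Rightarrow> real"
  assumes continuous: "continuous_on {a..b} D"
    and nonneg: "\<And>t. t \<in> {a..b} \<Longrightarrow> 0 \<le> D t"
    and zeros_negligible: "negligible {t \<in> {a..b}. D t = 0}"
begin

definition sublevel :: "real \<Rightarrow> real set" where "sublevel r = {t \<in> {a..b}. D t \<le> r}"

lemma sublevel_lmeasurable: "sublevel r \<in> lmeasurable"
proof -
  have "closed (D -` {..r} \<inter> {a..b})"
    using iffD1[OF continuous_on_closed_vimage[OF closed_atLeastAtMost] continuous] closed_atMost
    by blast
  moreover have "sublevel r = D -` {..r} \<inter> {a..b}" unfolding sublevel_def by auto
  moreover have "bounded (sublevel r)"
    unfolding sublevel_def by (rule bounded_subset[OF bounded_closed_interval]) auto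
  ultimately have "compact (sublevel r)" by (simp add: compact_eq_bounded_closed)
  then show ?thesis by (rule lmeasurable_compact)
qed

lemma sublevel_mono: "r \<le> r' \<Longrightarrow> sublevel r \<subseteq> sublevel r'"
  unfolding sublevel_def by auto

lemma exists_small_sublevel: "\<exists>r>0. r \<le> 1 / Suc n \<and> measure lebesgue (sublevel r) < (1/2)^n"
proof -
  let ?B = "\<lambda>m::nat. sublevel (1 / Suc m)"
  have "range ?B \<subseteq> sets lebesgue" using sublevel_lmeasurable by (auto intro: fmeasurableD)
  moreover have "decseq ?B"
    by (intro decseq_SucI sublevel_mono) (simp add: frac_le)
  moreover have "emeasure lebesgue (?B m) \<noteq> \<infinity>" for m
    using fmeasurableD2[OF sublevel_lmeasurable] by simp
  ultimately have "(\<lambda>m. measure lebesgue (?B m)) \<longlonglongrightarrow> measure lebesgue (\<Inter>m. ?B m)"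
    by (rule Lim_measure_decseq)
  moreover have "(\<Inter>m. ?B m) = {t \<in> {a..b}. D t = 0}"
  proof (intro equalityI subsetI)
    fix t assume t: "t \<in> (\<Inter>m. ?B m)"
    have "D t \<le> 0"
    proof (rule field_le_epsilon)
      fix e :: real assume "0 < e"
      then obtain m where "inverse (real (Suc m)) < e" using reals_Archimedean by blast
      moreover have "D t \<le> 1 / Suc m" using t unfolding sublevel_def by auto
      ultimately show "D t \<le> 0 + e" by (simp add: inverse_eq_divide)
    qed
    with t nonneg show "t \<in> {t \<in> {a..b}. D t = 0}" unfolding sublevel_def by force
  qed (auto simp: sublevel_def)
  ultimately have "(\<lambda>m. measure lebesgue (?B m)) \<longlonglongrightarrow> 0"
    using negligible_imp_measure0[OF zeros_negligible] by simp
  then have "\<forall>\<^sub>F m in sequentially. measure lebesgue (?B m) < (1/2)^n"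
    by (rule order_tendstoD) simp
  then obtain N where N: "\<And>m. N \<le> m \<Longrightarrow> measure lebesgue (?B m) < (1/2)^n"
    unfolding eventually_sequentially by blast
  define m where "m = max N n"
  have "1 / real (Suc m) \<le> 1 / Suc n" by (simp add: m_def frac_le)
  with N[of m] show ?thesis by (intro exI[of _ "1 / Suc m"]) (auto simp: m_def)
qed

definition radius :: "nat \<Rightarrow> real" where
  "radius n = (SOME r. r > 0 \<and> r \<le> 1 / Suc n \<and> measure lebesgue (sublevel r) < (1/2)^n)"

lemma radius: "radius n > 0" "radius n \<le> 1 / Suc n" "measure lebesgue (sublevel (radius n)) < (1/2)^n"
  using someI_ex[OF exists_small_sublevel[of n]] unfolding radius_def by auto

text \<open>Since \<open>radius k \<le> 1/(k+1)\<close>, only the bumps with \<open>k < 1/s\<close> can be nonzero at \<open>s > 0\<close>,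
  so this finite sum is the whole series \<open>\<Sum>k. bump (radius k) s\<close>.\<close>

definition profile :: "real \<Rightarrow> real" where
  "profile s = (\<Sum>k<nat \<lceil>1/s\<rceil>. bump (radius k) s)"

lemma profile_eq_sum:
  assumes "0 < s" "nat \<lceil>1/s\<rceil> \<le> m"
  shows "profile s = (\<Sum>k<m. bump (radius k) s)"
  unfolding profile_def
proof (rule sum.mono_neutral_left)
  show "\<forall>k\<in>{..<m} - {..<nat \<lceil>1/s\<rceil>}. bump (radius k) s = 0"
  proof
    fix k assume "k \<in> {..<m} - {..<nat \<lceil>1/s\<rceil>}"
    then have "1 / s \<le> real k" by auto
    then have "1 / real (Suc k) \<le> s"
      using \<open>0 < s\<close> by (simp add: field_simps)
    then show "bump (radius k) s = 0"
      using radius(1,2)[of k] by (intro bump_eq_0) auto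
  qed
qed (use assms in auto)

lemma profile_nonneg: "0 \<le> profile s"
  unfolding profile_def by (intro sum_nonneg bump_nonneg)

lemma profile_differentiable:
  assumes "0 < s"
  shows "profile differentiable (at s)"
proof (rule differentiable_transform_within)
  let ?m = "nat \<lceil>2/s\<rceil>"
  show "(\<lambda>x. \<Sum>k<?m. bump (radius k) x) differentiable (at s)"
    by (intro differentiable_sum ballI bump_differentiable) auto
  show "0 < s / 2" using assms by simp
  show "(\<Sum>k<?m. bump (radius k) x) = profile x" if "dist x s < s / 2" for x
  proof -
    have "\<bar>x - s\<bar> < s / 2" using that by (simp add: dist_real_def)
    then have "s / 2 < x" by arith
    then have "1 / x \<le> 2 / s" using assms by (auto simp: field_simps)
    then have "nat \<lceil>1/x\<rceil> \<le> ?m" by (intro nat_mono ceiling_mono)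
    moreover have "0 < x" using \<open>s / 2 < x\<close> assms by simp
    ultimately show ?thesis by (simp add: profile_eq_sum)
  qed
qed simp

lemma profile_ge:
  assumes "0 < s" "s \<le> Min (radius ` {..N}) / 2"
  shows "real (Suc N) / 4 \<le> profile s"
proof -
  have "(\<Sum>k<Suc N. (1/4::real)) \<le> (\<Sum>k<Suc N. bump (radius k) s)"
  proof (rule sum_mono)
    fix k assume "k \<in> {..<Suc N}"
    then have "Min (radius ` {..N}) \<le> radius k" by (intro Min_le) auto
    then have "s \<le> radius k / 2" using assms(2) by linarith
    then show "1/4 \<le> bump (radius k) s" by (rule bump_ge_quarter[OF radius(1)])
  qed
  also have "\<dots> \<le> (\<Sum>k<max (nat \<lceil>1/s\<rceil>) (Suc N). bump (radius k) s)"
    by (rule sum_mono2) (auto simp: bump_nonneg)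
  also have "\<dots> = profile s" by (rule profile_eq_sum[symmetric, OF assms(1)]) simp
  finally show ?thesis by simp
qed

lemma profile_unbounded: "\<exists>d>0. \<forall>s. 0 < s \<longrightarrow> s \<le> d \<longrightarrow> M \<le> profile s"
proof -
  obtain N where N: "4 * M \<le> real N" using real_arch_simple by blast
  have "0 < Min (radius ` {..N})" using radius(1) by (subst Min_gr_iff) auto
  moreover have "M \<le> profile s" if "0 < s" "s \<le> Min (radius ` {..N}) / 2" for s
    using profile_ge[OF that] N by simp
  ultimately show ?thesis by (intro exI[of _ "Min (radius ` {..N}) / 2"]) auto
qed

lemma integrable_bump_comp: "(\<lambda>t. bump (radius n) (D t)) integrable_on {a..b}"
  by (intro integrable_continuous_interval continuous_on_compose2[OF continuous_on_bump continuous])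
    auto

lemma integral_bump_le: "integral {a..b} (\<lambda>t. bump (radius n) (D t)) \<le> (1/2)^n"
proof -
  let ?A = "sublevel (radius n)"
  have sub: "?A \<inter> {a..b} = ?A" unfolding sublevel_def by auto
  have "(\<lambda>t. if t \<in> ?A then 1 else 0::real) integrable_on {a..b}"
    using sublevel_lmeasurable[of "radius n"]
    unfolding integrable_restrict_Int lmeasurable_iff_integrable_on sub .
  then have "integral {a..b} (\<lambda>t. bump (radius n) (D t))
      \<le> integral {a..b} (\<lambda>t. if t \<in> ?A then 1 else 0)"
  proof (rule integral_le[OF integrable_bump_comp])
    show "bump (radius n) (D t) \<le> (if t \<in> ?A then 1 else 0)" if "t \<in> {a..b}" for t
      using that radius(1)[of n] bump_le_1 bump_eq_0 nonneg unfolding sublevel_def by auto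
  qed
  also have "\<dots> = measure lebesgue ?A"
    unfolding integral_restrict_Int lmeasure_integral[OF sublevel_lmeasurable] sub ..
  finally show ?thesis using radius(3)[of n] by linarith
qed

definition partial_profile :: "nat \<Rightarrow> real \<Rightarrow> real" where
  "partial_profile k t = (\<Sum>n<k. bump (radius n) (D t))"

lemma integrable_partial_profile: "partial_profile k integrable_on {a..b}"
  unfolding partial_profile_def by (intro integrable_sum integrable_bump_comp) auto

lemma abs_integral_partial_profile_le: "\<bar>integral {a..b} (partial_profile k)\<bar> \<le> 2"
proof -
  have "integral {a..b} (partial_profile k) = (\<Sum>n<k. integral {a..b} (\<lambda>t. bump (radius n) (D t)))"
    unfolding partial_profile_def by (rule integral_sum) (auto intro: integrable_bump_comp)
  moreover have "0 \<le> integral {a..b} (\<lambda>t. bump (radius n) (D t))" for n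
    using integral_nonneg[OF integrable_bump_comp] bump_nonneg by blast
  moreover have "(\<Sum>n<k. integral {a..b} (\<lambda>t. bump (radius n) (D t))) \<le> (\<Sum>n<k. (1/2)^n)"
    by (intro sum_mono integral_bump_le)
  moreover have "(\<Sum>n<k. (1/2::real)^n) \<le> 2" by (simp add: sum_gp_strict)
  ultimately show ?thesis by (simp add: sum_nonneg)
qed

lemma partial_profile_eventually_eq:
  assumes "0 < D t"
  shows "\<forall>\<^sub>F k in sequentially. partial_profile k t = profile (D t)"
proof -
  have "partial_profile k t = profile (D t)" if "nat \<lceil>1 / D t\<rceil> \<le> k" for k
    using profile_eq_sum[OF assms that] by (simp add: partial_profile_def)
  then show ?thesis unfolding eventually_sequentially by blast
qed

text \<open>The limit is taken off the zero set of \<open>D\<close>: there the partial sums diverge, while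
  \<open>profile 0 = 0\<close>.\<close>

lemma integrable_profile: "(\<lambda>t. profile (D t)) integrable_on {a..b}"
proof -
  let ?S = "{a..b} - {t \<in> {a..b}. D t = 0}"
  have null_diff: "negligible {t \<in> ?S - {a..b}. P t}" "negligible {t \<in> {a..b} - ?S. P t}"
    for P :: "real \<Rightarrow> bool"
    by (auto intro: negligible_subset[OF zeros_negligible])
  have "bounded (range (\<lambda>k. integral ?S (partial_profile k)))"
    unfolding bounded_real integral_spike_set[OF null_diff]
    using abs_integral_partial_profile_le by blast
  then have "(\<lambda>t. profile (D t)) integrable_on ?S \<and>
      (\<lambda>k. integral ?S (partial_profile k)) \<longlonglongrightarrow> integral ?S (\<lambda>t. profile (D t))"
  proof (rule monotone_convergence_increasing[rotated 3])
    show "partial_profile k integrable_on ?S" for k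
      by (rule integrable_spike_set[OF integrable_partial_profile null_diff(2,1)])
    show "partial_profile k t \<le> partial_profile (Suc k) t" for k t
      by (simp add: partial_profile_def bump_nonneg)
    show "(\<lambda>k. partial_profile k t) \<longlonglongrightarrow> profile (D t)" if "t \<in> ?S" for t
      using that nonneg[of t] by (intro tendsto_eventually partial_profile_eventually_eq) force
  qed
  then have "(\<lambda>t. profile (D t)) integrable_on ?S" ..
  then show ?thesis by (rule integrable_spike_set[OF _ null_diff])
qed

lemma exists_blowup_profile:
  "\<exists>\<Phi> :: real \<Rightarrow> real. (\<forall>s. 0 \<le> \<Phi> s) \<and> (\<forall>s>0. \<Phi> differentiable (at s)) \<and>
        (\<forall>M. \<exists>d>0. \<forall>s. 0 < s \<longrightarrow> s \<le> d \<longrightarrow> M \<le> \<Phi> s) \<and>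
        (\<lambda>t. \<Phi> (D t)) integrable_on {a..b}"
  using profile_nonneg profile_differentiable profile_unbounded integrable_profile
  by (intro exI[of _ profile] conjI allI impI) auto

end

section \<open>The homeomorphism induced by a weight blowing up on \<open>F\<close>\<close>

locale blowup_weight = closed_subset_interval +
  fixes w :: "real \<Rightarrow> real"
  assumes negligible: "negligible F"
    and w_integrable: "w integrable_on {\<alpha>..\<beta>}"
    and w_ge_1: "\<And>t. t \<in> {\<alpha>..\<beta>} \<Longrightarrow> 1 \<le> w t"
    and w_differentiable: "\<And>t. t \<in> {\<alpha>..\<beta>} \<Longrightarrow> t \<notin> F \<Longrightarrow> w differentiable (at t)"
    and w_large_near_F: "\<And>M. \<exists>d>0. \<forall>f\<in>F. \<forall>t\<in>{\<alpha>..\<beta>} - F. \<bar>t - f\<bar> < d \<longrightarrow> M \<le> w t"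
begin

definition scale :: real where "scale = (\<beta> - \<alpha>) / integral {\<alpha>..\<beta>} w"

definition g :: "real \<Rightarrow> real" where "g y = \<alpha> + integral {\<alpha>..y} (\<lambda>t. scale * w t)"

definition h :: "real \<Rightarrow> real" where "h = inv_into {\<alpha>..\<beta>} g"

definition h' :: "real \<Rightarrow> real" where "h' x = (if h x \<in> F then 0 else inverse (scale * w (h x)))"

lemma integral_w_ge:
  assumes uv: "\<alpha> \<le> u" "u \<le> v" "v \<le> \<beta>" and m: "\<And>s. s \<in> {u..v} \<Longrightarrow> s \<notin> F \<Longrightarrow> m \<le> w s"
  shows "m * (v - u) \<le> integral {u..v} w"
proof -
  let ?w = "\<lambda>s. if s \<in> F then m else w s"
  have "w integrable_on {u..v}" using uv by (intro integrable_on_subinterval[OF w_integrable]) auto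
  then have "?w integrable_on {u..v}" by (rule integrable_spike[OF _ negligible]) simp
  then have "integral {u..v} (\<lambda>s. m) \<le> integral {u..v} ?w" by (rule integral_le[rotated]) (use m in auto)
  also have "integral {u..v} ?w = integral {u..v} w" by (rule integral_spike[OF negligible]) simp
  finally show ?thesis using uv by (simp add: mult.commute)
qed

lemma integral_w_pos: "0 < integral {\<alpha>..\<beta>} w"
  using integral_w_ge[of \<alpha> \<beta> 1] lt w_ge_1 by force

lemma scale_pos: "0 < scale"
  unfolding scale_def using integral_w_pos lt by simp

lemma scaled_w_integrable: "(\<lambda>t. scale * w t) integrable_on {\<alpha>..\<beta>}"
  using integrable_on_cmult_left[OF w_integrable, of scale] by simp

lemma g_diff:
  assumes "\<alpha> \<le> u" "u \<le> v" "v \<le> \<beta>"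
  shows "g v - g u = scale * integral {u..v} w"
  using indefinite_integral_diff[OF scaled_w_integrable assms] by (simp add: g_def)

lemma g_left: "g \<alpha> = \<alpha>"
  by (simp add: g_def)

lemma g_right: "g \<beta> = \<beta>"
  using g_diff[of \<alpha> \<beta>] lt integral_w_pos by (simp add: g_left scale_def)

lemma g_diff_ge: "\<alpha> \<le> u \<Longrightarrow> u \<le> v \<Longrightarrow> v \<le> \<beta> \<Longrightarrow> scale * (v - u) \<le> g v - g u"
  using integral_w_ge[of u v 1] w_ge_1 scale_pos by (simp add: g_diff)

lemma g_strict_mono: "strict_mono_on {\<alpha>..\<beta>} g"
proof (rule strict_mono_onI)
  fix u v assume "u \<in> {\<alpha>..\<beta>}" "v \<in> {\<alpha>..\<beta>}" "u < v"
  moreover have "0 < scale * (v - u)" using scale_pos \<open>u < v\<close> by simp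
  ultimately show "g u < g v" using g_diff_ge[of u v] by auto
qed

lemma continuous_on_g: "continuous_on {\<alpha>..\<beta>} g"
  unfolding g_def by (intro continuous_intros indefinite_integral_continuous_1 scaled_w_integrable)

lemma g_image: "g ` {\<alpha>..\<beta>} = {\<alpha>..\<beta>}"
proof
  show "g ` {\<alpha>..\<beta>} \<subseteq> {\<alpha>..\<beta>}"
  proof
    fix y assume "y \<in> g ` {\<alpha>..\<beta>}"
    then obtain x where x: "x \<in> {\<alpha>..\<beta>}" "y = g x" by blast
    then have "g \<alpha> \<le> g x" "g x \<le> g \<beta>"
      using strict_mono_on_leD[OF g_strict_mono] lt by auto
    then show "y \<in> {\<alpha>..\<beta>}" using x g_left g_right by simp
  qed
  show "{\<alpha>..\<beta>} \<subseteq> g ` {\<alpha>..\<beta>}"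
  proof
    fix y assume "y \<in> {\<alpha>..\<beta>}"
    then obtain x where "\<alpha> \<le> x" "x \<le> \<beta>" "g x = y"
      using IVT'[of g \<alpha> y \<beta>] g_left g_right continuous_on_g lt by auto
    then show "y \<in> g ` {\<alpha>..\<beta>}" by force
  qed
qed

lemma homeomorphism_g_h: "homeomorphism {\<alpha>..\<beta>} {\<alpha>..\<beta>} g h"
proof -
  have inj: "inj_on g {\<alpha>..\<beta>}" by (rule strict_mono_on_imp_inj_on[OF g_strict_mono])
  have "continuous_on (g ` {\<alpha>..\<beta>}) h"
    unfolding h_def using inj by (intro continuous_on_inv continuous_on_g) auto
  moreover have "h ` {\<alpha>..\<beta>} = {\<alpha>..\<beta>}"
    using inv_into_image_cancel[OF inj order_refl] g_image unfolding h_def by simp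
  ultimately show ?thesis
    unfolding homeomorphism_def h_def using inj g_image continuous_on_g f_inv_into_f[of _ g]
    by auto
qed

lemma h_in: "x \<in> {\<alpha>..\<beta>} \<Longrightarrow> h x \<in> {\<alpha>..\<beta>}"
  and g_h: "x \<in> {\<alpha>..\<beta>} \<Longrightarrow> g (h x) = x"
  and h_g: "y \<in> {\<alpha>..\<beta>} \<Longrightarrow> h (g y) = y"
  and continuous_on_h: "continuous_on {\<alpha>..\<beta>} h"
  using homeomorphism_g_h unfolding homeomorphism_def by auto

lemma h_strict_mono: "strict_mono_on {\<alpha>..\<beta>} h"
proof (rule strict_mono_onI)
  fix x y assume xy: "x \<in> {\<alpha>..\<beta>}" "y \<in> {\<alpha>..\<beta>}" "x < y"
  show "h x < h y"
  proof (rule ccontr)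
    assume "\<not> h x < h y"
    then have "g (h y) \<le> g (h x)"
      using strict_mono_on_leD[OF g_strict_mono] h_in xy by simp
    then show False using g_h xy by simp
  qed
qed

lemma not_in_F_interior: "t \<in> {\<alpha>..\<beta>} \<Longrightarrow> t \<notin> F \<Longrightarrow> \<alpha> < t \<and> t < \<beta>"
  using left_mem right_mem by (cases "t = \<alpha> \<or> t = \<beta>") auto

lemma h_not_in_F_interior:
  assumes "x \<in> {\<alpha>..\<beta>}" "h x \<notin> F"
  shows "\<alpha> < x \<and> x < \<beta>"
proof -
  have "h \<alpha> = \<alpha>" using h_g[of \<alpha>] lt by (simp add: g_left)
  moreover have "h \<beta> = \<beta>" using h_g[of \<beta>] lt by (simp add: g_right)
  ultimately have "x \<noteq> \<alpha>" "x \<noteq> \<beta>" using assms(2) left_mem right_mem by auto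
  then show ?thesis using assms(1) by auto
qed

lemma g_has_derivative:
  assumes y: "y \<in> {\<alpha>..\<beta>}" "y \<notin> F"
  shows "(g has_real_derivative scale * w y) (at y)"
proof -
  have "isCont w y"
    using differentiable_imp_continuous_within[OF w_differentiable[OF y]] .
  then have "continuous (at y within {\<alpha>..\<beta>} - {}) (\<lambda>t. scale * w t)"
    by (rule continuous_mult[OF continuous_const continuous_at_imp_continuous_at_within])
  with y have "((\<lambda>u. integral {\<alpha>..u} (\<lambda>t. scale * w t)) has_vector_derivative scale * w y)
      (at y within {\<alpha>..\<beta>} - {})"
    by (intro integral_has_vector_derivative_continuous_at[OF scaled_w_integrable]) auto
  then have "((\<lambda>u. integral {\<alpha>..u} (\<lambda>t. scale * w t)) has_real_derivative scale * w y) (at y)"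
    using at_within_Icc_at[of \<alpha> y \<beta>] not_in_F_interior[OF y]
    by (simp add: has_real_derivative_iff_has_vector_derivative)
  from DERIV_add[OF DERIV_const this] show ?thesis
    unfolding g_def[abs_def] by simp
qed

lemma h_continuous_at_off_F: "x \<in> {\<alpha>..\<beta>} \<Longrightarrow> h x \<notin> F \<Longrightarrow> isCont h x"
  using continuous_on_interior[OF continuous_on_h] h_not_in_F_interior by simp

lemma h_has_derivative_off_F:
  assumes x: "x \<in> {\<alpha>..\<beta>}" and hx: "h x \<notin> F"
  shows "(h has_real_derivative h' x) (at x)"
proof -
  have "scale * w (h x) \<noteq> 0" using scale_pos w_ge_1[OF h_in[OF x]] by simp
  moreover have "isCont h x" using h_continuous_at_off_F[OF x hx] .
  ultimately have "(h has_real_derivative inverse (scale * w (h x))) (at x)"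
    using h_not_in_F_interior[OF x hx] g_h
    by (intro DERIV_inverse_function[where f=g and g=h and a=\<alpha> and b=\<beta>]
        g_has_derivative[OF h_in[OF x] hx]) auto
  then show ?thesis using hx by (simp add: h'_def)
qed

lemma h'_differentiable:
  assumes x: "x \<in> {\<alpha>..\<beta>}" and hx: "h x \<notin> F"
  shows "h' differentiable (at x)"
proof -
  have "(\<lambda>x. inverse (scale * w (h x))) differentiable (at x)"
  proof (intro differentiable_inverse differentiable_mult differentiable_const)
    have "h differentiable (at x)"
      using h_has_derivative_off_F[OF x hx] real_differentiable_def by blast
    then show "(\<lambda>x. w (h x)) differentiable (at x)"
      by (rule differentiable_compose[where f=w and g=h, OF w_differentiable[OF h_in[OF x] hx]])
    show "scale * w (h x) \<noteq> 0" using scale_pos w_ge_1[OF h_in[OF x]] by simp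
  qed
  then obtain D where D: "((\<lambda>x. inverse (scale * w (h x))) has_derivative D) (at x)"
    unfolding differentiable_def by blast
  have "\<forall>\<^sub>F x' in at x. h x' \<in> - F"
    using h_continuous_at_off_F[OF x hx] closed hx
    unfolding isCont_def by (intro topological_tendstoD) auto
  then have "\<forall>\<^sub>F x' in at x. inverse (scale * w (h x')) = h' x'"
    by eventually_elim (simp add: h'_def)
  with D have "(h' has_derivative D) (at x)"
    by (rule has_derivative_transform_eventually) (simp_all add: h'_def hx)
  then show ?thesis unfolding differentiable_def by blast
qed

lemma g_expands_near_F:
  assumes y: "y \<in> F" and y': "y' \<in> {\<alpha>..\<beta>}" and close: "\<bar>y' - y\<bar> < d"
    and large: "\<forall>f\<in>F. \<forall>t\<in>{\<alpha>..\<beta>} - F. \<bar>t - f\<bar> < d \<longrightarrow> M \<le> w t"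
  shows "scale * M * \<bar>y' - y\<bar> \<le> \<bar>g y' - g y\<bar>"
proof -
  define lo hi where "lo = min y y'" and "hi = max y y'"
  have y_in: "y \<in> {\<alpha>..\<beta>}" using y subset by auto
  then have lo_hi: "\<alpha> \<le> lo" "lo \<le> hi" "hi \<le> \<beta>" using y' by (auto simp: lo_def hi_def)
  have "M \<le> w s" if "s \<in> {lo..hi}" "s \<notin> F" for s
  proof -
    have "s \<in> {\<alpha>..\<beta>}" "\<bar>s - y\<bar> < d" using that lo_hi close by (auto simp: lo_def hi_def)
    then show ?thesis using large y that(2) by blast
  qed
  then have "M * (hi - lo) \<le> integral {lo..hi} w" by (intro integral_w_ge lo_hi)
  then have "scale * (M * (hi - lo)) \<le> g hi - g lo"
    using g_diff[OF lo_hi] scale_pos by simp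
  moreover have "\<bar>g y' - g y\<bar> = g hi - g lo \<and> \<bar>y' - y\<bar> = hi - lo"
  proof (cases "y \<le> y'")
    case True
    then have "g y \<le> g y'" using strict_mono_on_leD[OF g_strict_mono] y_in y' by blast
    with True show ?thesis by (simp add: lo_def hi_def)
  next
    case False
    then have "g y' \<le> g y" using strict_mono_on_leD[OF g_strict_mono] y_in y' by simp
    with False show ?thesis by (simp add: lo_def hi_def)
  qed
  ultimately show ?thesis by (simp add: mult.assoc)
qed

lemma h_flat_near_F:
  assumes x: "x \<in> {\<alpha>..\<beta>}" and hx: "h x \<in> F" and e: "0 < e"
  shows "\<exists>\<delta>>0. \<forall>x'\<in>{\<alpha>..\<beta>}. \<bar>x' - x\<bar> < \<delta> \<longrightarrow> \<bar>h x' - h x\<bar> \<le> e * \<bar>x' - x\<bar> \<and> \<bar>h' x'\<bar> \<le> e"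
proof -
  define M where "M = inverse (scale * e)"
  have scale_M: "scale * M = inverse e" using scale_pos by (simp add: M_def)
  obtain d where "d > 0" and large: "\<forall>f\<in>F. \<forall>t\<in>{\<alpha>..\<beta>} - F. \<bar>t - f\<bar> < d \<longrightarrow> M \<le> w t"
    using w_large_near_F by blast
  then obtain \<delta> where "\<delta> > 0" and near: "\<And>x'. x' \<in> {\<alpha>..\<beta>} \<Longrightarrow> \<bar>x' - x\<bar> < \<delta> \<Longrightarrow> \<bar>h x' - h x\<bar> < d"
    using continuous_on_h x unfolding continuous_on_iff dist_real_def by metis
  have "\<bar>h x' - h x\<bar> \<le> e * \<bar>x' - x\<bar> \<and> \<bar>h' x'\<bar> \<le> e"
    if x': "x' \<in> {\<alpha>..\<beta>}" "\<bar>x' - x\<bar> < \<delta>" for x'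
  proof
    have close: "\<bar>h x' - h x\<bar> < d" using near[OF x'] .
    have "inverse e * \<bar>h x' - h x\<bar> \<le> \<bar>g (h x') - g (h x)\<bar>"
      using g_expands_near_F[OF hx h_in[OF x'(1)] close large] by (simp add: scale_M)
    then show "\<bar>h x' - h x\<bar> \<le> e * \<bar>x' - x\<bar>"
      using e g_h[OF x] g_h[OF x'(1)] by (simp add: field_simps)
    show "\<bar>h' x'\<bar> \<le> e"
    proof (cases "h x' \<in> F")
      case False
      then have "M \<le> w (h x')" using large hx h_in[OF x'(1)] close by blast
      then have "inverse e \<le> scale * w (h x')"
        using scale_pos by (simp add: flip: scale_M)
      then have "inverse (scale * w (h x')) \<le> e"
        using e by (metis inverse_inverse_eq le_imp_inverse_le positive_imp_inverse_positive)
      moreover have "0 < scale * w (h x')" using scale_pos w_ge_1[OF h_in[OF x'(1)]] by simp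
      moreover have "h' x' = inverse (scale * w (h x'))" using False by (simp add: h'_def)
      ultimately show ?thesis by (metis abs_of_pos positive_imp_inverse_positive)
    qed (use e in \<open>simp add: h'_def\<close>)
  qed
  with \<open>\<delta> > 0\<close> show ?thesis by blast
qed

lemma h_has_derivative_on_F:
  assumes "x \<in> {\<alpha>..\<beta>}" "h x \<in> F"
  shows "(h has_real_derivative 0) (at x within {\<alpha>..\<beta>})"
  unfolding has_field_derivative_def has_derivative_within_alt
proof (intro conjI allI impI)
  show "bounded_linear ((*) (0::real))" by (rule bounded_linear_mult_right)
  fix e :: real assume "0 < e"
  from h_flat_near_F[OF assms this] obtain \<delta> where "\<delta> > 0"
    and "\<forall>x'\<in>{\<alpha>..\<beta>}. \<bar>x' - x\<bar> < \<delta> \<longrightarrow> \<bar>h x' - h x\<bar> \<le> e * \<bar>x' - x\<bar>"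
    by blast
  then show "\<exists>d>0. \<forall>y\<in>{\<alpha>..\<beta>}. norm (y - x) < d \<longrightarrow> norm (h y - h x - 0 * (y - x)) \<le> e * norm (y - x)"
    by auto
qed

lemma h_has_derivative:
  assumes x: "x \<in> {\<alpha>..\<beta>}"
  shows "(h has_real_derivative h' x) (at x within {\<alpha>..\<beta>})"
proof (cases "h x \<in> F")
  case True
  then show ?thesis using h_has_derivative_on_F[OF x] by (simp add: h'_def)
next
  case False
  then show ?thesis by (rule has_field_derivative_at_within[OF h_has_derivative_off_F[OF x]])
qed

lemma continuous_on_h': "continuous_on {\<alpha>..\<beta>} h'"
  unfolding continuous_on_eq_continuous_within
proof (rule ballI)
  fix x assume x: "x \<in> {\<alpha>..\<beta>}"
  show "continuous (at x within {\<alpha>..\<beta>}) h'"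
  proof (cases "h x \<in> F")
    case False
    show ?thesis
      using h'_differentiable[OF x False]
      by (rule differentiable_imp_continuous_within[OF differentiable_at_withinI])
  next
    case True
    then have "h' x = 0" by (simp add: h'_def)
    show ?thesis unfolding continuous_within_eps_delta
    proof (intro allI impI)
      fix e :: real assume "0 < e"
      then obtain \<delta> where "\<delta> > 0" and "\<forall>x'\<in>{\<alpha>..\<beta>}. \<bar>x' - x\<bar> < \<delta> \<longrightarrow> \<bar>h' x'\<bar> \<le> e / 2"
        using h_flat_near_F[OF x True, of "e / 2"] by auto
      with \<open>0 < e\<close> \<open>h' x = 0\<close>
      show "\<exists>d>0. \<forall>x'\<in>{\<alpha>..\<beta>}. dist x' x < d \<longrightarrow> dist (h' x') (h' x) < e"
        by (intro exI[of _ \<delta>]) (auto simp: dist_real_def)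
    qed
  qed
qed

lemma h'_eq_0_iff:
  assumes x: "x \<in> {\<alpha>..\<beta>}"
  shows "h' x = 0 \<longleftrightarrow> h x \<in> F"
proof -
  have "scale * w (h x) \<noteq> 0" using scale_pos w_ge_1[OF h_in[OF x]] by simp
  then show ?thesis by (simp add: h'_def)
qed

lemma abs_continuous_g: "abs_continuous_on_interval \<alpha> \<beta> g"
proof -
  have "abs_continuous_on_interval \<alpha> \<beta> (\<lambda>y. \<alpha> + integral {\<alpha>..y} (\<lambda>t. scale * w t))"
  proof (rule abs_continuous_on_interval_integral)
    show "(\<lambda>t. scale * w t) integrable_on {\<alpha>..\<beta>}" by (rule scaled_w_integrable)
    show "0 \<le> scale * w t" if "t \<in> {\<alpha>..\<beta>}" for t
      using scale_pos w_ge_1[OF that] by simp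
  qed
  then show ?thesis by (simp add: g_def[abs_def])
qed

end

lemma (in closed_subset_interval) exists_blowup_weight:
  assumes "negligible F"
  shows "\<exists>w. blowup_weight \<alpha> \<beta> F w"
proof -
  have zeros: "{t \<in> {\<alpha>..\<beta>}. gap_product t = 0} = F"
    using gap_product_eq_0_iff subset by auto
  interpret negligible_zeros \<alpha> \<beta> gap_product
  proof
    show "continuous_on {\<alpha>..\<beta>} gap_product" by (rule continuous_on_gap_product)
    show "0 \<le> gap_product t" if "t \<in> {\<alpha>..\<beta>}" for t using that by (rule gap_product_nonneg)
    show "negligible {t \<in> {\<alpha>..\<beta>}. gap_product t = 0}" unfolding zeros by (rule assms)
  qed
  obtain \<Phi> :: "real \<Rightarrow> real" where \<Phi>_nonneg: "\<And>s. 0 \<le> \<Phi> s"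
    and \<Phi>_differentiable: "\<And>s. 0 < s \<Longrightarrow> \<Phi> differentiable (at s)"
    and \<Phi>_large: "\<And>M. \<exists>d>0. \<forall>s. 0 < s \<longrightarrow> s \<le> d \<longrightarrow> M \<le> \<Phi> s"
    and \<Phi>_integrable: "(\<lambda>t. \<Phi> (gap_product t)) integrable_on {\<alpha>..\<beta>}"
    using exists_blowup_profile by blast
  have pos: "0 < gap_product t" if "t \<in> {\<alpha>..\<beta>}" "t \<notin> F" for t
    using gap_product_nonneg[OF that(1)] gap_product_eq_0_iff[OF that(1)] that(2) by linarith
  show ?thesis
  proof (intro exI[of _ "\<lambda>t. 1 + \<Phi> (gap_product t)"] blowup_weight.intro[OF closed_subset_interval_axioms]
      blowup_weight_axioms.intro)
    show "negligible F" by fact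
    show "(\<lambda>t. 1 + \<Phi> (gap_product t)) integrable_on {\<alpha>..\<beta>}"
      by (intro integrable_add integrable_const_ivl \<Phi>_integrable)
    show "1 \<le> 1 + \<Phi> (gap_product t)" for t using \<Phi>_nonneg[of "gap_product t"] by simp
    show "(\<lambda>t. 1 + \<Phi> (gap_product t)) differentiable (at t)" if "t \<in> {\<alpha>..\<beta>}" "t \<notin> F" for t
      using differentiable_compose[where f=\<Phi> and g=gap_product,
          OF \<Phi>_differentiable[OF pos[OF that]] gap_product_differentiable[OF that]]
      by (rule differentiable_add[OF differentiable_const])
    show "\<exists>d>0. \<forall>f\<in>F. \<forall>t\<in>{\<alpha>..\<beta>} - F. \<bar>t - f\<bar> < d \<longrightarrow> M \<le> 1 + \<Phi> (gap_product t)" for M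
    proof -
      obtain d where "d > 0" and d: "\<forall>s. 0 < s \<longrightarrow> s \<le> d \<longrightarrow> M - 1 \<le> \<Phi> s"
        using \<Phi>_large by blast
      have "M \<le> 1 + \<Phi> (gap_product t)" if "f \<in> F" "t \<in> {\<alpha>..\<beta>} - F" "\<bar>t - f\<bar> < d" for f t
        using d pos[of t] gap_product_le_dist[of t f] that by force
      with \<open>d > 0\<close> show ?thesis by blast
    qed
  qed
qed

theorem lemma3p5:
  fixes \<alpha> \<beta> :: real and F :: "real set"
  assumes "\<alpha> < \<beta>"
    and "closed F" and "F \<subseteq> {\<alpha>..\<beta>}" and "\<alpha> \<in> F" and "\<beta> \<in> F"
    and "F \<in> null_sets lborel"
  shows "\<exists>h h' g.
           homeomorphism {\<alpha>..\<beta>} {\<alpha>..\<beta>} h g \<and>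
           strict_mono_on {\<alpha>..\<beta>} h \<and>
           (\<forall>x\<in>{\<alpha>..\<beta>}. (h has_real_derivative h' x) (at x within {\<alpha>..\<beta>})) \<and>
           continuous_on {\<alpha>..\<beta>} h' \<and>
           (\<forall>x\<in>{\<alpha>..\<beta>}. h' x = 0 \<longleftrightarrow> x \<in> {\<alpha>..\<beta>} \<inter> h -` F) \<and>
           (\<forall>x\<in>{\<alpha>..\<beta>} - h -` F. h' differentiable (at x within {\<alpha>..\<beta>})) \<and>
           abs_continuous_on_interval \<alpha> \<beta> g"
proof -
  interpret closed_subset_interval \<alpha> \<beta> F using assms(1-5) by unfold_locales
  have "negligible F"
    unfolding negligible_iff_null_sets using assms(6) by (rule null_sets_completionI)
  then obtain w where "blowup_weight \<alpha> \<beta> F w" using exists_blowup_weight by blast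
  then interpret W: blowup_weight \<alpha> \<beta> F w .
  show ?thesis
  proof (rule exI[of _ W.h], rule exI[of _ W.h'], rule exI[of _ W.g], intro conjI ballI)
    show "homeomorphism {\<alpha>..\<beta>} {\<alpha>..\<beta>} W.h W.g"
      using W.homeomorphism_g_h by (rule homeomorphism_sym[THEN iffD1])
    show "strict_mono_on {\<alpha>..\<beta>} W.h" by (rule W.h_strict_mono)
    show "continuous_on {\<alpha>..\<beta>} W.h'" by (rule W.continuous_on_h')
    show "abs_continuous_on_interval \<alpha> \<beta> W.g" by (rule W.abs_continuous_g)
    fix x assume x: "x \<in> {\<alpha>..\<beta>}"
    show "(W.h has_real_derivative W.h' x) (at x within {\<alpha>..\<beta>})" using x by (rule W.h_has_derivative)
    show "W.h' x = 0 \<longleftrightarrow> x \<in> {\<alpha>..\<beta>} \<inter> W.h -` F" using W.h'_eq_0_iff[OF x] x by simp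
  next
    fix x assume "x \<in> {\<alpha>..\<beta>} - W.h -` F"
    then show "W.h' differentiable (at x within {\<alpha>..\<beta>})"
      by (auto intro: differentiable_at_withinI[OF W.h'_differentiable])
  qed
qed

end
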